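(* Let $w=w_1\cdots w_n\in S_n$ and view $w$ as the composition $(w_1,\ldots,w_n)$. Then the Newton polytope $\mathrm{Newton}(\kappa_w)$ of the key polynomial $\kappa_w(x)$ equals the Bruhat interval polytope $\mathsf{Q}_{w,w_0}$, where $w_0=n\,(n-1)\cdots 2\,1$ is the maximum of $S_n$ in the Bruhat order.
   Context: For a polynomial $f=\sum_\alpha c_\alpha x^\alpha\in\mathbb{R}[x_1,\ldots,x_n]$, $\mathrm{Newton}(f)$ is the convex hull of $\{\alpha\colon c_\alpha\neq0\}$. Let $\partial_i f=(f-s_if)/(x_i-x_{i+1})$, where $s_if$ swaps $x_i$ and $x_{i+1}$, and $\pi_i f=\partial_i(x_if)$. Key polynomials for a composition $\alpha$ of length $n$: if $\alpha$ is weakly decreasing, $\kappa_\alpha=x^\alpha$; otherwise choose $i$ with $\alpha_i<\alpha_{i+1}$, let $\alpha'$ be $\alpha$ with $\alpha_i,\alpha_{i+1}$ interchanged, and set $\kappa_\alpha=\pi_i\kappa_{\alpha'}$. For $u\le v$ in the Bruhat order on $S_n$, the Bruhat interval polytope $\mathsf{Q}_{u,v}$ is the convex hull in $\mathbb{R}^n$ of the vectors $(\sigma_1,\ldots,\sigma_n)$ for all $\sigma$ in the Bruhat interval $[u,v]$. *)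

theory Defs
  imports Complex_Main "HOL-Library.Poly_Mapping"
begin

text \<open>The paper's variable x_(i+1) is our Var i (0-based indexing).\<close>

type_synonym mpoly = "(nat \<Rightarrow>\<^sub>0 nat) \<Rightarrow>\<^sub>0 real"

definition Var :: "nat \<Rightarrow> mpoly" where
  "Var i = Poly_Mapping.single (Poly_Mapping.single i 1) 1"

definition exps :: "nat list \<Rightarrow> (nat \<Rightarrow>\<^sub>0 nat)" where
  "exps a = Abs_poly_mapping (\<lambda>j. if j < length a then a ! j else 0)"

definition monom :: "nat list \<Rightarrow> mpoly" where
  "monom a = Poly_Mapping.single (exps a) 1"

definition swap_idx :: "nat \<Rightarrow> nat \<Rightarrow> nat" where
  "swap_idx i j = (if j = i then Suc i else if j = Suc i then i else j)"

definition swap_exp :: "nat \<Rightarrow> (nat \<Rightarrow>\<^sub>0 nat) \<Rightarrow> (nat \<Rightarrow>\<^sub>0 nat)" where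
  "swap_exp i \<alpha> = Abs_poly_mapping (\<lambda>j. Poly_Mapping.lookup \<alpha> (swap_idx i j))"

definition swap_poly :: "nat \<Rightarrow> mpoly \<Rightarrow> mpoly" where
  "swap_poly i f = Abs_poly_mapping (\<lambda>\<alpha>. Poly_Mapping.lookup f (swap_exp i \<alpha>))"

definition divdiff :: "nat \<Rightarrow> mpoly \<Rightarrow> mpoly" where
  "divdiff i f = (THE g. (Var i - Var (Suc i)) * g = f - swap_poly i f)"

definition pi_op :: "nat \<Rightarrow> mpoly \<Rightarrow> mpoly" where
  "pi_op i f = divdiff i (Var i * f)"

text \<open>Number of pairs i < j with a_i < a_j (strictly decreases by one at each step of the
  recursion below, so it is exactly the needed number of steps).\<close>
definition n_asc :: "nat list \<Rightarrow> nat" where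
  "n_asc a = card {(i, j). i < j \<and> j < length a \<and> a ! i < a ! j}"

fun key_aux :: "nat \<Rightarrow> nat list \<Rightarrow> mpoly" where
  "key_aux 0 a = monom a"
| "key_aux (Suc k) a =
     (if sorted_wrt (\<ge>) a then monom a
      else (let i = (LEAST i. Suc i < length a \<and> a ! i < a ! Suc i)
            in pi_op i (key_aux k (a[i := a ! Suc i, Suc i := a ! i]))))"

definition key :: "nat list \<Rightarrow> mpoly" where
  "key a = key_aux (n_asc a) a"

definition conv :: "(nat \<Rightarrow> real) set \<Rightarrow> (nat \<Rightarrow> real) set" where
  "conv S = {x. \<exists>k (c :: nat \<Rightarrow> real) (p :: nat \<Rightarrow> nat \<Rightarrow> real).
                 (\<forall>l<k. 0 \<le> c l \<and> p l \<in> S) \<and> (\<Sum>l<k. c l) = 1 \<and>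
                 x = (\<lambda>j. \<Sum>l<k. c l * p l j)}"

definition newton :: "mpoly \<Rightarrow> (nat \<Rightarrow> real) set" where
  "newton f = conv {(\<lambda>j. real (Poly_Mapping.lookup \<alpha> j)) | \<alpha>. Poly_Mapping.lookup f \<alpha> \<noteq> 0}"

definition perms :: "nat \<Rightarrow> nat list set" where
  "perms n = {\<sigma>. distinct \<sigma> \<and> set \<sigma> = {1..n}}"

text \<open>u < u t_(ij) whenever the length increases, i.e. u_i < u_j for positions i < j.\<close>
definition bruhat_step :: "nat list \<Rightarrow> nat list \<Rightarrow> bool" where
  "bruhat_step u v = (\<exists>i j. i < j \<and> j < length u \<and> u ! i < u ! j \<and>
                            v = u[i := u ! j, j := u ! i])"

definition bruhat_le :: "nat list \<Rightarrow> nat list \<Rightarrow> bool" where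
  "bruhat_le = bruhat_step\<^sup>*\<^sup>*"

definition w0 :: "nat \<Rightarrow> nat list" where
  "w0 n = rev [1..<Suc n]"

definition perm_vec :: "nat list \<Rightarrow> (nat \<Rightarrow> real)" where
  "perm_vec \<sigma> = (\<lambda>j. if j < length \<sigma> then real (\<sigma> ! j) else 0)"

definition bruhat_polytope :: "nat \<Rightarrow> nat list \<Rightarrow> nat list \<Rightarrow> (nat \<Rightarrow> real) set" where
  "bruhat_polytope n u v =
     conv {perm_vec \<sigma> | \<sigma>. \<sigma> \<in> perms n \<and> bruhat_le u \<sigma> \<and> bruhat_le \<sigma> v}"

end

theory Submission
  imports Defs
begin

text \<open>For an ascent \<open>w(i) < w(i + 1)\<close> we have \<open>\<kappa>\<^sub>w = \<pi>\<^sub>i \<kappa>\<^bsub>w s\<^sub>i\<^esub>\<close>, and along this recursion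
  we keep two invariants: (1) every exponent of \<open>\<kappa>\<^sub>w\<close> lies in the convex hull of the permutations
  \<open>\<sigma> \<ge> w\<close>, and (2) every such \<open>x\<^sup>\<sigma>\<close> occurs in \<open>\<kappa>\<^sub>w\<close> with coefficient 1.
  The exponents of \<open>\<pi>\<^sub>i x\<^sup>\<beta>\<close> lie on the segment from \<open>\<beta>\<close> to \<open>\<beta> s\<^sub>i\<close>, and by the lifting
  property \<open>\<sigma> s\<^sub>i \<ge> w\<close> whenever \<open>\<sigma> \<ge> w s\<^sub>i\<close>; this propagates (1). For (2), an exponent inside the
  permutohedron contributes to \<open>x\<^sup>\<sigma>\<close> under \<open>\<pi>\<^sub>i\<close> only if it is \<open>\<sigma>\<close> or \<open>\<sigma> s\<^sub>i\<close>, and then only the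
  Bruhat-larger of the two does, with coefficient 1; that one lies above \<open>w s\<^sub>i\<close>, again by the
  lifting property. Hence the Newton polytope is the convex hull of \<open>{\<sigma>. w \<le> \<sigma>}\<close>, which is
  \<open>Q\<^bsub>w,w\<^sub>0\<^esub>\<close> since \<open>w\<^sub>0\<close> is the top element.\<close>

section \<open>Adjacent transpositions and the Bruhat order\<close>

definition swap_list :: "nat \<Rightarrow> nat list \<Rightarrow> nat list" where
  "swap_list i a = a[i := a ! Suc i, Suc i := a ! i]"

lemma length_swap_list [simp]: "length (swap_list i a) = length a"
  by (simp add: swap_list_def)

lemma swap_idx_swap_idx [simp]: "swap_idx i (swap_idx i j) = j"
  by (auto simp: swap_idx_def)

lemma swap_idx_eq_iff: "swap_idx i j = k \<longleftrightarrow> j = swap_idx i k"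
  by (auto simp: swap_idx_def)

lemma swap_idx_less: "Suc i < n \<Longrightarrow> j < n \<Longrightarrow> swap_idx i j < n"
  by (auto simp: swap_idx_def)

lemma nth_swap_list: "Suc i < length a \<Longrightarrow> j < length a \<Longrightarrow> swap_list i a ! j = a ! swap_idx i j"
  by (auto simp: swap_list_def swap_idx_def nth_list_update)

lemma swap_list_nth_i [simp]: "Suc i < length a \<Longrightarrow> swap_list i a ! i = a ! Suc i"
  by (simp add: nth_swap_list swap_idx_def)

lemma swap_list_nth_Suc [simp]: "Suc i < length a \<Longrightarrow> swap_list i a ! Suc i = a ! i"
  by (simp add: nth_swap_list swap_idx_def)

lemma swap_list_swap_list [simp]: "Suc i < length a \<Longrightarrow> swap_list i (swap_list i a) = a"
  by (rule nth_equalityI) (auto simp: nth_swap_list swap_idx_less)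

lemma swap_list_id: "a ! i = a ! Suc i \<Longrightarrow> swap_list i a = a"
  by (metis swap_list_def list_update_id)

lemma swap_list_perms: "Suc i < length a \<Longrightarrow> a \<in> perms n \<Longrightarrow> swap_list i a \<in> perms n"
  by (simp add: swap_list_def perms_def)

lemma perms_length: "\<sigma> \<in> perms n \<Longrightarrow> length \<sigma> = n"
  unfolding perms_def using distinct_card[of \<sigma>] by auto

lemma perms_nth_neq: "\<sigma> \<in> perms n \<Longrightarrow> Suc i < n \<Longrightarrow> \<sigma> ! i \<noteq> \<sigma> ! Suc i"
  by (simp add: perms_def perms_length nth_eq_iff_index_eq)

lemma bruhat_step_swap_list: "Suc i < length a \<Longrightarrow> a ! i < a ! Suc i \<Longrightarrow> bruhat_step a (swap_list i a)"
  unfolding bruhat_step_def swap_list_def by (intro exI[of _ i] exI[of _ "Suc i"]) simp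

lemma bruhat_step_length: "bruhat_step u v \<Longrightarrow> length v = length u"
  by (auto simp: bruhat_step_def)

lemma bruhat_step_perms: "bruhat_step u v \<Longrightarrow> u \<in> perms n \<Longrightarrow> v \<in> perms n"
  unfolding bruhat_step_def perms_def by (elim exE conjE) simp

lemma bruhat_le_refl [simp]: "bruhat_le u u"
  by (simp add: bruhat_le_def)

lemma bruhat_le_trans: "bruhat_le u v \<Longrightarrow> bruhat_le v w \<Longrightarrow> bruhat_le u w"
  by (simp add: bruhat_le_def)

lemma bruhat_step_imp_le: "bruhat_step u v \<Longrightarrow> bruhat_le u v"
  by (simp add: bruhat_le_def)

lemma bruhat_le_swap_list:
  "Suc i < length a \<Longrightarrow> a ! i \<le> a ! Suc i \<Longrightarrow> bruhat_le a (swap_list i a)"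
  by (cases "a ! i = a ! Suc i")
    (simp_all add: swap_list_id bruhat_step_imp_le bruhat_step_swap_list)

lemma bruhat_le_perms: "bruhat_le u v \<Longrightarrow> u \<in> perms n \<Longrightarrow> v \<in> perms n"
  unfolding bruhat_le_def
  by (induction rule: rtranclp_induct) (auto intro: bruhat_step_perms)

lemma bruhat_le_length: "bruhat_le u v \<Longrightarrow> length v = length u"
  unfolding bruhat_le_def
  by (induction rule: rtranclp_induct) (auto dest: bruhat_step_length)

lemma bruhat_step_swap_lists:
  assumes st: "bruhat_step \<tau> \<sigma>" and i: "Suc i < length \<tau>" and ne: "\<sigma> \<noteq> swap_list i \<tau>"
  shows "bruhat_step (swap_list i \<tau>) (swap_list i \<sigma>)"
proof -
  obtain p q where pq: "p < q" "q < length \<tau>" "\<tau> ! p < \<tau> ! q"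
    and \<sigma>: "\<sigma> = \<tau>[p := \<tau> ! q, q := \<tau> ! p]"
    using st by (auto simp: bruhat_step_def)
  have npq: "\<not> (p = i \<and> q = Suc i)"
    using ne \<sigma> by (auto simp: swap_list_def)
  define p' where "p' = swap_idx i p"
  define q' where "q' = swap_idx i q"
  have pq': "p' < q'" "q' < length \<tau>" "p' < length \<tau>"
    using pq npq i by (auto simp: p'_def q'_def swap_idx_def)
  have "swap_list i \<sigma> = (swap_list i \<tau>)[p' := swap_list i \<tau> ! q', q' := swap_list i \<tau> ! p']"
    using pq pq' i
    by (intro nth_equalityI)
      (simp_all add: nth_swap_list \<sigma> nth_list_update p'_def q'_def swap_idx_eq_iff swap_idx_less)
  moreover have "swap_list i \<tau> ! p' < swap_list i \<tau> ! q'"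
    using pq i by (simp add: nth_swap_list p'_def q'_def swap_idx_less)
  ultimately show ?thesis
    using pq' unfolding bruhat_step_def by (metis length_swap_list)
qed

definition desc_at :: "nat \<Rightarrow> nat list \<Rightarrow> nat list" where
  "desc_at i \<sigma> = (if \<sigma> ! Suc i < \<sigma> ! i then \<sigma> else swap_list i \<sigma>)"

definition asc_at :: "nat \<Rightarrow> nat list \<Rightarrow> nat list" where
  "asc_at i \<sigma> = (if \<sigma> ! i < \<sigma> ! Suc i then \<sigma> else swap_list i \<sigma>)"

lemma bruhat_le_desc_at: "Suc i < length \<sigma> \<Longrightarrow> bruhat_le \<sigma> (desc_at i \<sigma>)"
  by (simp add: desc_at_def bruhat_le_swap_list)

lemma bruhat_le_swap_desc_at: "Suc i < length \<sigma> \<Longrightarrow> bruhat_le (swap_list i \<sigma>) (desc_at i \<sigma>)"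
  using bruhat_le_swap_list[of i "swap_list i \<sigma>"] by (simp add: desc_at_def)

lemma bruhat_asc_at_le: "Suc i < length \<sigma> \<Longrightarrow> bruhat_le (asc_at i \<sigma>) \<sigma>"
  using bruhat_le_swap_list[of i "swap_list i \<sigma>"] by (simp add: asc_at_def)

lemma bruhat_asc_at_le_swap: "Suc i < length \<sigma> \<Longrightarrow> bruhat_le (asc_at i \<sigma>) (swap_list i \<sigma>)"
  by (simp add: asc_at_def bruhat_le_swap_list)

lemma desc_at_swap_list:
  "Suc i < length \<sigma> \<Longrightarrow> \<sigma> ! i \<noteq> \<sigma> ! Suc i \<Longrightarrow> desc_at i (swap_list i \<sigma>) = desc_at i \<sigma>"
  by (auto simp: desc_at_def)

lemma asc_at_swap_list:
  "Suc i < length \<sigma> \<Longrightarrow> \<sigma> ! i \<noteq> \<sigma> ! Suc i \<Longrightarrow> asc_at i (swap_list i \<sigma>) = asc_at i \<sigma>"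
  by (auto simp: asc_at_def)

lemma bruhat_step_desc_asc_mono:
  assumes st: "bruhat_step \<tau> \<sigma>" and ne: "\<tau> ! i \<noteq> \<tau> ! Suc i" and i: "Suc i < length \<tau>"
  shows "bruhat_le (desc_at i \<tau>) (desc_at i \<sigma>) \<and> bruhat_le (asc_at i \<tau>) (asc_at i \<sigma>)"
proof (cases "\<sigma> = swap_list i \<tau>")
  case True
  then show ?thesis using i ne by (simp add: desc_at_swap_list asc_at_swap_list)
next
  case False
  have i': "Suc i < length \<sigma>" using i bruhat_step_length[OF st] by simp
  have le: "bruhat_le \<tau> \<sigma>" "bruhat_le (swap_list i \<tau>) (swap_list i \<sigma>)"
    using st bruhat_step_swap_lists[OF st i False] by (simp_all add: bruhat_step_imp_le)
  have "bruhat_le (desc_at i \<tau>) (desc_at i \<sigma>)"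
    using le bruhat_le_desc_at[OF i'] bruhat_le_swap_desc_at[OF i']
    by (auto simp: desc_at_def [of i \<tau>] intro: bruhat_le_trans)
  moreover have "bruhat_le (asc_at i \<tau>) (asc_at i \<sigma>)"
    using le bruhat_asc_at_le[OF i] bruhat_asc_at_le_swap[OF i]
    by (auto simp: asc_at_def [of i \<sigma>] intro: bruhat_le_trans)
  ultimately show ?thesis ..
qed

lemma bruhat_le_desc_asc_mono:
  assumes le: "bruhat_le \<tau> \<sigma>" and \<tau>: "\<tau> \<in> perms n" and i: "Suc i < n"
  shows "bruhat_le (desc_at i \<tau>) (desc_at i \<sigma>) \<and> bruhat_le (asc_at i \<tau>) (asc_at i \<sigma>)"
  using le unfolding bruhat_le_def
proof (induction rule: rtranclp_induct)
  case (step \<rho> \<sigma>)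
  have "\<rho> \<in> perms n" using step.hyps(1) \<tau> by (simp add: bruhat_le_perms bruhat_le_def)
  then have "bruhat_le (desc_at i \<rho>) (desc_at i \<sigma>) \<and> bruhat_le (asc_at i \<rho>) (asc_at i \<sigma>)"
    using step.hyps(2) i by (intro bruhat_step_desc_asc_mono) (simp_all add: perms_nth_neq perms_length)
  with step.IH show ?case by (auto simp: bruhat_le_def)
qed simp

text \<open>The lifting property of the Bruhat order, for an ascent \<open>w < w s\<^sub>i\<close>.\<close>

lemma bruhat_le_lift_desc:
  assumes "w \<in> perms n" "Suc i < n" "w ! i < w ! Suc i" "bruhat_le w \<sigma>"
  shows "bruhat_le (swap_list i w) (desc_at i \<sigma>)"
  using bruhat_le_desc_asc_mono[OF assms(4,1,2)] assms(3) by (simp add: desc_at_def)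

lemma bruhat_le_lift_swap:
  assumes w: "w \<in> perms n" and i: "Suc i < n" "w ! i < w ! Suc i"
    and le: "bruhat_le (swap_list i w) \<sigma>"
  shows "bruhat_le w (swap_list i \<sigma>)"
proof -
  have lw: "Suc i < length w" using w i by (simp add: perms_length)
  have "asc_at i (swap_list i w) = w" using lw i by (simp add: asc_at_def)
  then have "bruhat_le w (asc_at i \<sigma>)"
    using bruhat_le_desc_asc_mono[OF le swap_list_perms[OF lw w] i(1)] by simp
  moreover have "Suc i < length \<sigma>" using bruhat_le_length[OF le] lw by simp
  ultimately show ?thesis by (blast intro: bruhat_le_trans bruhat_asc_at_le_swap)
qed

lemma sorted_desc_bruhat_maximal:
  assumes "sorted_wrt (\<ge>) a" "bruhat_le a \<sigma>"
  shows "\<sigma> = a"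
proof -
  have "\<not> bruhat_step a b" for b
    using assms(1) by (auto simp: bruhat_step_def sorted_wrt_iff_nth_less not_less[symmetric])
  then show ?thesis using assms(2) unfolding bruhat_le_def
    by (auto elim: converse_rtranclpE)
qed

lemma not_sorted_desc_imp_ascent:
  assumes "\<not> sorted_wrt (\<ge>) (a :: nat list)"
  shows "\<exists>i. Suc i < length a \<and> a ! i < a ! Suc i"
proof -
  have "transp ((\<ge>) :: nat \<Rightarrow> nat \<Rightarrow> bool)" by (auto simp: transp_def)
  then show ?thesis using assms by (auto simp: sorted_wrt_iff_nth_Suc_transp not_le)
qed

lemma finite_n_asc_set: "finite {(i, j). i < j \<and> j < length a \<and> a ! i < a ! j}"
  by (rule finite_subset[of _ "{..<length a} \<times> {..<length a}"]) auto

lemma n_asc_swap_list_less: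
  assumes i: "Suc i < length a" and asc: "a ! i < a ! Suc i"
  shows "n_asc (swap_list i a) < n_asc a"
proof -
  let ?P = "\<lambda>a. {(i, j). i < j \<and> j < length a \<and> a ! i < a ! j}"
  let ?f = "\<lambda>(p, q). (swap_idx i p, swap_idx i q)"
  have "inj_on ?f (?P (swap_list i a))"
    by (rule inj_onI) (auto simp: swap_idx_eq_iff)
  moreover have "?f ` ?P (swap_list i a) \<subseteq> ?P a - {(i, Suc i)}"
  proof
    fix x assume "x \<in> ?f ` ?P (swap_list i a)"
    then obtain p q where x: "x = (swap_idx i p, swap_idx i q)" and pq: "p < q" "q < length a"
      "swap_list i a ! p < swap_list i a ! q" by auto
    have "\<not> (p = i \<and> q = Suc i)" using pq i asc by auto
    then have "swap_idx i p < swap_idx i q" using pq by (auto simp: swap_idx_def)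
    moreover have "a ! swap_idx i p < a ! swap_idx i q" using pq i by (simp add: nth_swap_list)
    moreover have "swap_idx i q < length a" using pq i by (simp add: swap_idx_less)
    moreover have "x \<noteq> (i, Suc i)" using x pq by (auto simp: swap_idx_def split: if_splits)
    ultimately show "x \<in> ?P a - {(i, Suc i)}" using x by simp
  qed
  ultimately have "card (?P (swap_list i a)) \<le> card (?P a - {(i, Suc i)})"
    using finite_n_asc_set by (intro card_inj_on_le) auto
  also have "\<dots> < card (?P a)"
    using i asc finite_n_asc_set by (intro card_Diff1_less) auto
  finally show ?thesis by (simp add: n_asc_def)
qed

lemma n_asc_eq_0_imp_sorted_desc: "n_asc a = 0 \<Longrightarrow> sorted_wrt (\<ge>) a"
  using not_sorted_desc_imp_ascent[of a] finite_n_asc_set[of a]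
  by (auto simp: n_asc_def)

lemma perms_sorted_desc_eq_w0:
  assumes "\<sigma> \<in> perms n" "sorted_wrt (\<ge>) \<sigma>"
  shows "\<sigma> = w0 n"
proof -
  have "sorted (rev \<sigma>)" "distinct (rev \<sigma>)" "set (rev \<sigma>) = {1..n}"
    using assms by (auto simp: perms_def sorted_wrt_rev)
  then have "rev \<sigma> = [1..<Suc n]"
    by (metis sorted_distinct_set_unique sorted_upt distinct_upt set_upt atLeastLessThanSuc_atLeastAtMost)
  then show ?thesis by (simp add: w0_def rev_swap)
qed

lemma bruhat_le_w0:
  assumes "\<sigma> \<in> perms n"
  shows "bruhat_le \<sigma> (w0 n)"
  using assms
proof (induction "n_asc \<sigma>" arbitrary: \<sigma> rule: less_induct)
  case less
  show ?case
  proof (cases "sorted_wrt (\<ge>) \<sigma>")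
    case True
    then show ?thesis using perms_sorted_desc_eq_w0[OF less.prems] by simp
  next
    case False
    then obtain i where i: "Suc i < length \<sigma>" "\<sigma> ! i < \<sigma> ! Suc i"
      using not_sorted_desc_imp_ascent by blast
    have "bruhat_le (swap_list i \<sigma>) (w0 n)"
      using less.hyps[OF n_asc_swap_list_less[OF i]] swap_list_perms[OF i(1) less.prems] by simp
    then show ?thesis using bruhat_step_swap_list[OF i] by (blast intro: bruhat_le_trans bruhat_step_imp_le)
  qed
qed

section \<open>Convex hulls\<close>

lemma subset_conv: "S \<subseteq> conv S"
proof
  fix x assume "x \<in> S"
  then show "x \<in> conv S"
    unfolding conv_def by (intro CollectI exI[of _ 1] exI[of _ "\<lambda>_. 1"] exI[of _ "\<lambda>_. x"]) simp
qed

lemma conv_mono: "S \<subseteq> T \<Longrightarrow> conv S \<subseteq> conv T"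
  unfolding conv_def by blast

lemma conv_convex_comb:
  assumes x: "x \<in> conv T" and y: "y \<in> conv T" and t: "0 \<le> t" "t \<le> 1"
  shows "(\<lambda>j. t * x j + (1 - t) * y j) \<in> conv T"
proof -
  obtain k1 :: nat and c1 p1 where 1: "\<forall>l<k1. 0 \<le> c1 l \<and> p1 l \<in> T" "(\<Sum>l<k1. c1 l) = 1"
    "x = (\<lambda>j. \<Sum>l<k1. c1 l * p1 l j)" using x unfolding conv_def by blast
  obtain k2 :: nat and c2 p2 where 2: "\<forall>l<k2. 0 \<le> c2 l \<and> p2 l \<in> T" "(\<Sum>l<k2. c2 l) = 1"
    "y = (\<lambda>j. \<Sum>l<k2. c2 l * p2 l j)" using y unfolding conv_def by blast
  define c where "c l = (if l < k1 then t * c1 l else (1 - t) * c2 (l - k1))" for l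
  define p where "p l = (if l < k1 then p1 l else p2 (l - k1))" for l
  have split: "(\<Sum>l<k1 + k2. g l) = (\<Sum>l<k1. g l) + (\<Sum>l<k2. g (k1 + l))" for g :: "nat \<Rightarrow> real"
    by (induction k2) simp_all
  have "\<forall>l<k1 + k2. 0 \<le> c l \<and> p l \<in> T"
    using 1 2 t by (auto simp: c_def p_def)
  moreover have "(\<Sum>l<k1 + k2. c l) = 1"
    using 1 2 by (simp add: split c_def flip: sum_distrib_left)
  moreover have "(\<lambda>j. t * x j + (1 - t) * y j) = (\<lambda>j. \<Sum>l<k1 + k2. c l * p l j)"
    using 1 2 by (simp add: split c_def p_def sum_distrib_left mult.assoc)
  ultimately show ?thesis
    unfolding conv_def by (intro CollectI exI[of _ "k1 + k2"] exI[of _ c] exI[of _ p]) simp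
qed

lemma conv_subset:
  assumes "S \<subseteq> conv T"
  shows "conv S \<subseteq> conv T"
proof -
  have "(\<lambda>j. \<Sum>l<k. c l * p l j) \<in> conv T"
    if "\<forall>l<k. 0 \<le> c l \<and> p l \<in> S" "(\<Sum>l<k. c l) = 1" for k :: nat and c p
    using that
  proof (induction k arbitrary: c)
    case (Suc k)
    have p: "p k \<in> conv T" using Suc.prems(1) assms by auto
    show ?case
    proof (cases "c k = 1")
      case True
      then have "\<forall>l<k. c l = 0"
        using Suc.prems sum_nonneg_eq_0_iff[of "{..<k}" c] by auto
      then have "(\<lambda>j. \<Sum>l<Suc k. c l * p l j) = p k" using True by simp
      then show ?thesis using p by simp
    next
      case False
      have ck: "0 \<le> c k" "c k < 1"
        using False Suc.prems sum_nonneg[of "{..<k}" c] by (auto simp: less_le)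
      define c' where "c' l = c l / (1 - c k)" for l
      have "(\<lambda>j. \<Sum>l<k. c' l * p l j) \<in> conv T"
      proof (rule Suc.IH)
        show "\<forall>l<k. 0 \<le> c' l \<and> p l \<in> S" using Suc.prems(1) ck by (auto simp: c'_def)
        show "(\<Sum>l<k. c' l) = 1"
          using Suc.prems(2) ck by (simp add: c'_def flip: sum_divide_distrib)
      qed
      then have "(\<lambda>j. c k * p k j + (1 - c k) * (\<Sum>l<k. c' l * p l j)) \<in> conv T"
        using p ck by (intro conv_convex_comb) simp_all
      moreover have "(\<lambda>j. c k * p k j + (1 - c k) * (\<Sum>l<k. c' l * p l j))
          = (\<lambda>j. \<Sum>l<Suc k. c l * p l j)"
        using ck by (simp add: sum_distrib_left c'_def add.commute)
      ultimately show ?thesis by simp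
    qed
  qed simp
  then show ?thesis unfolding conv_def by blast
qed

lemma conv_eqI: "A \<subseteq> conv B \<Longrightarrow> B \<subseteq> A \<Longrightarrow> conv A = conv B"
  by (metis conv_subset conv_mono subset_antisym)

lemma comp_in_conv:
  assumes "x \<in> conv T"
  shows "x \<circ> g \<in> conv ((\<lambda>y. y \<circ> g) ` T)"
proof -
  obtain k :: nat and c p where cp: "\<forall>l<k. 0 \<le> c l \<and> p l \<in> T" "(\<Sum>l<k. c l) = 1"
    and x: "x = (\<lambda>j. \<Sum>l<k. c l * p l j)" using assms unfolding conv_def by blast
  have "x \<circ> g = (\<lambda>j. \<Sum>l<k. c l * (p l \<circ> g) j)" by (simp add: x comp_def)
  with cp show ?thesis
    unfolding conv_def by (intro CollectI exI[of _ k] exI[of _ c] exI[of _ "\<lambda>l. p l \<circ> g"]) auto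
qed

lemma conv_sum_le:
  assumes "x \<in> conv S" and "\<And>p. p \<in> S \<Longrightarrow> (\<Sum>j\<in>J. p j) \<le> b"
  shows "(\<Sum>j\<in>J. x j) \<le> b"
proof -
  obtain k :: nat and c p where cp: "\<forall>l<k. 0 \<le> c l \<and> p l \<in> S" "(\<Sum>l<k. c l) = 1"
    and x: "x = (\<lambda>j. \<Sum>l<k. c l * p l j)" using assms(1) unfolding conv_def by blast
  have "(\<Sum>j\<in>J. x j) = (\<Sum>l<k. c l * (\<Sum>j\<in>J. p l j))"
    by (simp add: x sum_distrib_left sum.swap[of _ J])
  also have "\<dots> \<le> (\<Sum>l<k. c l * b)"
    using cp assms(2) by (intro sum_mono mult_left_mono) auto
  also have "\<dots> = b" using cp(2) by (simp flip: sum_distrib_right)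
  finally show ?thesis .
qed

section \<open>The operator \<open>\<pi>\<^sub>i\<close> on monomials\<close>

lemma lookup_exps: "Poly_Mapping.lookup (exps a) j = (if j < length a then a ! j else 0)"
proof -
  have "finite {j. (if j < length a then a ! j else (0::nat)) \<noteq> 0}"
    by (rule finite_subset[of _ "{..<length a}"]) auto
  then show ?thesis unfolding exps_def by simp
qed

lemma lookup_swap_exp: "Poly_Mapping.lookup (swap_exp i \<alpha>) j = Poly_Mapping.lookup \<alpha> (swap_idx i j)"
proof -
  have "{j. Poly_Mapping.lookup \<alpha> (swap_idx i j) \<noteq> 0} \<subseteq> swap_idx i ` Poly_Mapping.keys \<alpha>"
    by (auto simp: in_keys_iff intro!: image_eqI[where x="swap_idx i _"])
  then have "finite {j. Poly_Mapping.lookup \<alpha> (swap_idx i j) \<noteq> 0}"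
    by (rule finite_subset) auto
  then show ?thesis unfolding swap_exp_def by simp
qed

lemma swap_exp_swap_exp [simp]: "swap_exp i (swap_exp i \<alpha>) = \<alpha>"
  by (rule poly_mapping_eqI) (simp add: lookup_swap_exp)

lemma exps_swap_list: "Suc i < length \<sigma> \<Longrightarrow> exps (swap_list i \<sigma>) = swap_exp i (exps \<sigma>)"
  by (rule poly_mapping_eqI)
    (auto simp: lookup_exps lookup_swap_exp nth_swap_list swap_idx_less, auto simp: swap_idx_def)

lemma lookup_swap_poly: "Poly_Mapping.lookup (swap_poly i f) \<alpha> = Poly_Mapping.lookup f (swap_exp i \<alpha>)"
proof -
  have "{\<alpha>. Poly_Mapping.lookup f (swap_exp i \<alpha>) \<noteq> 0} \<subseteq> swap_exp i ` Poly_Mapping.keys f"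
    by (auto simp: in_keys_iff intro!: image_eqI[where x="swap_exp i _"])
  then have "finite {\<alpha>. Poly_Mapping.lookup f (swap_exp i \<alpha>) \<noteq> 0}"
    by (rule finite_subset) auto
  then show ?thesis unfolding swap_poly_def by simp
qed

lemma swap_poly_sum: "finite A \<Longrightarrow> swap_poly i (sum F A) = (\<Sum>x\<in>A. swap_poly i (F x))"
  by (rule poly_mapping_eqI) (simp add: lookup_swap_poly lookup_sum)

lemma swap_poly_single:
  "swap_poly i (Poly_Mapping.single \<beta> c) = Poly_Mapping.single (swap_exp i \<beta>) c"
proof (rule poly_mapping_eqI)
  fix \<alpha>
  have "\<beta> = swap_exp i \<alpha> \<longleftrightarrow> swap_exp i \<beta> = \<alpha>" by auto
  then show "Poly_Mapping.lookup (swap_poly i (Poly_Mapping.single \<beta> c)) \<alpha> =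
      Poly_Mapping.lookup (Poly_Mapping.single (swap_exp i \<beta>) c) \<alpha>"
    by (simp only: lookup_swap_poly lookup_single)
qed

lemma poly_mapping_sum_single_keys:
  "f = (\<Sum>\<beta>\<in>Poly_Mapping.keys f. Poly_Mapping.single \<beta> (Poly_Mapping.lookup f \<beta>))"
proof (rule poly_mapping_eqI)
  fix \<alpha>
  have "(\<Sum>\<beta>\<in>Poly_Mapping.keys f. Poly_Mapping.lookup (Poly_Mapping.single \<beta> (Poly_Mapping.lookup f \<beta>)) \<alpha>)
      = (\<Sum>\<beta>\<in>Poly_Mapping.keys f. if \<beta> = \<alpha> then Poly_Mapping.lookup f \<beta> else 0)"
    by (rule sum.cong) (auto simp: lookup_single when_def)
  also have "\<dots> = Poly_Mapping.lookup f \<alpha>"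
    by (simp add: sum.delta' in_keys_iff)
  finally show "Poly_Mapping.lookup f \<alpha> =
      Poly_Mapping.lookup (\<Sum>\<beta>\<in>Poly_Mapping.keys f. Poly_Mapping.single \<beta> (Poly_Mapping.lookup f \<beta>)) \<alpha>"
    by (simp add: lookup_sum)
qed

lemma Var_minus_Var_Suc_neq_0: "Var i - Var (Suc i) \<noteq> 0"
proof
  assume "Var i - Var (Suc i) = 0"
  then have "Poly_Mapping.lookup (Var i - Var (Suc i)) (Poly_Mapping.single i 1) = 0" by simp
  moreover have "Poly_Mapping.single i (1::nat) \<noteq> Poly_Mapping.single (Suc i) 1"
    by (metis lookup_single_eq lookup_single_not_eq n_not_Suc_n zero_neq_one)
  ultimately show False
    by (simp add: Var_def lookup_minus lookup_single when_def)
qed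

definition adj_update :: "nat \<Rightarrow> (nat \<Rightarrow>\<^sub>0 nat) \<Rightarrow> nat \<Rightarrow> nat \<Rightarrow> (nat \<Rightarrow>\<^sub>0 nat)" where
  "adj_update i \<beta> u v =
     Abs_poly_mapping (\<lambda>j. if j = i then u else if j = Suc i then v else Poly_Mapping.lookup \<beta> j)"

lemma lookup_adj_update: "Poly_Mapping.lookup (adj_update i \<beta> u v) j =
   (if j = i then u else if j = Suc i then v else Poly_Mapping.lookup \<beta> j)"
proof -
  have "finite {j. (if j = i then u else if j = Suc i then v else Poly_Mapping.lookup \<beta> j) \<noteq> 0}"
    by (rule finite_subset[of _ "Poly_Mapping.keys \<beta> \<union> {i, Suc i}"]) (auto simp: in_keys_iff)
  then show ?thesis unfolding adj_update_def by simp
qed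

lemma adj_update_self:
  "adj_update i \<beta> (Poly_Mapping.lookup \<beta> i) (Poly_Mapping.lookup \<beta> (Suc i)) = \<beta>"
  by (rule poly_mapping_eqI) (simp add: lookup_adj_update)

lemma adj_update_eq_iff: "adj_update i \<beta> u v = \<gamma> \<longleftrightarrow>
   (\<forall>j. j \<noteq> i \<and> j \<noteq> Suc i \<longrightarrow> Poly_Mapping.lookup \<gamma> j = Poly_Mapping.lookup \<beta> j) \<and>
   Poly_Mapping.lookup \<gamma> i = u \<and> Poly_Mapping.lookup \<gamma> (Suc i) = v"
proof
  assume "adj_update i \<beta> u v = \<gamma>"
  then show "(\<forall>j. j \<noteq> i \<and> j \<noteq> Suc i \<longrightarrow> Poly_Mapping.lookup \<gamma> j = Poly_Mapping.lookup \<beta> j) \<and>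
      Poly_Mapping.lookup \<gamma> i = u \<and> Poly_Mapping.lookup \<gamma> (Suc i) = v"
    by (auto simp flip: \<open>adj_update i \<beta> u v = \<gamma>\<close> simp: lookup_adj_update)
qed (intro poly_mapping_eqI, simp add: lookup_adj_update)

lemma swap_exp_adj_update: "swap_exp i (adj_update i \<beta> u v) = adj_update i \<beta> v u"
  by (rule poly_mapping_eqI) (auto simp: lookup_swap_exp lookup_adj_update swap_idx_def)

definition adj_monom :: "nat \<Rightarrow> (nat \<Rightarrow>\<^sub>0 nat) \<Rightarrow> real \<Rightarrow> nat \<Rightarrow> nat \<Rightarrow> mpoly" where
  "adj_monom i \<beta> c u v = Poly_Mapping.single (adj_update i \<beta> u v) c"

lemma Var_mult_adj_monom: "Var i * adj_monom i \<beta> c u v = adj_monom i \<beta> c (Suc u) v"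
proof -
  have "Poly_Mapping.single i 1 + adj_update i \<beta> u v = adj_update i \<beta> (Suc u) v"
    by (rule poly_mapping_eqI) (auto simp: lookup_add lookup_adj_update lookup_single)
  then show ?thesis by (simp add: Var_def adj_monom_def mult_single)
qed

lemma Var_Suc_mult_adj_monom: "Var (Suc i) * adj_monom i \<beta> c u v = adj_monom i \<beta> c u (Suc v)"
proof -
  have "Poly_Mapping.single (Suc i) 1 + adj_update i \<beta> u v = adj_update i \<beta> u (Suc v)"
    by (rule poly_mapping_eqI) (auto simp: lookup_add lookup_adj_update lookup_single)
  then show ?thesis by (simp add: Var_def adj_monom_def mult_single)
qed

lemma swap_poly_adj_monom: "swap_poly i (adj_monom i \<beta> c u v) = adj_monom i \<beta> c v u"
  by (simp add: adj_monom_def swap_poly_single swap_exp_adj_update)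

definition pi_monom :: "nat \<Rightarrow> (nat \<Rightarrow>\<^sub>0 nat) \<Rightarrow> real \<Rightarrow> mpoly" where
  "pi_monom i \<beta> c = (let a = Poly_Mapping.lookup \<beta> i; b = Poly_Mapping.lookup \<beta> (Suc i) in
     if b \<le> a then (\<Sum>k<Suc a - b. adj_monom i \<beta> c (a - k) (b + k))
     else - (\<Sum>k<b - Suc a. adj_monom i \<beta> c (b - Suc k) (Suc a + k)))"

lemma Var_diff_mult_adj_monom_telescope:
  assumes "N \<le> Suc u"
  shows "(\<Sum>k<N. (Var i - Var (Suc i)) * adj_monom i \<beta> c (u - k) (v + k))
    = adj_monom i \<beta> c (Suc u) v - adj_monom i \<beta> c (Suc u - N) (v + N)"
  using assms
proof (induction N)
  case (Suc N)
  then have "Suc u - N = Suc (u - N)" by simp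
  with Suc show ?case
    by (simp add: left_diff_distrib Var_mult_adj_monom Var_Suc_mult_adj_monom)
qed simp

lemma pi_monom_divdiff_eq:
  fixes i :: nat and \<beta> :: "nat \<Rightarrow>\<^sub>0 nat" and c :: real
  defines "f \<equiv> Var i * Poly_Mapping.single \<beta> c"
  shows "(Var i - Var (Suc i)) * pi_monom i \<beta> c = f - swap_poly i f"
proof -
  define a where "a = Poly_Mapping.lookup \<beta> i"
  define b where "b = Poly_Mapping.lookup \<beta> (Suc i)"
  have "Poly_Mapping.single \<beta> c = adj_monom i \<beta> c a b"
    by (simp add: adj_monom_def a_def b_def adj_update_self)
  then have f: "f - swap_poly i f = adj_monom i \<beta> c (Suc a) b - adj_monom i \<beta> c b (Suc a)"
    by (simp add: f_def Var_mult_adj_monom swap_poly_adj_monom)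
  show ?thesis
  proof (cases "b \<le> a")
    case True
    then have "pi_monom i \<beta> c = (\<Sum>k<Suc a - b. adj_monom i \<beta> c (a - k) (b + k))"
      by (simp add: pi_monom_def Let_def a_def b_def)
    then have "(Var i - Var (Suc i)) * pi_monom i \<beta> c
        = adj_monom i \<beta> c (Suc a) b - adj_monom i \<beta> c (Suc a - (Suc a - b)) (b + (Suc a - b))"
      by (simp only: sum_distrib_left Var_diff_mult_adj_monom_telescope diff_le_self)
    with True show ?thesis by (simp add: f)
  next
    case False
    then have "pi_monom i \<beta> c = - (\<Sum>k<b - Suc a. adj_monom i \<beta> c (b - 1 - k) (Suc a + k))"
      by (simp add: pi_monom_def Let_def a_def b_def)
    moreover have "b - Suc a \<le> Suc (b - 1)" by simp
    ultimately have "(Var i - Var (Suc i)) * pi_monom i \<beta> c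
        = - (adj_monom i \<beta> c (Suc (b - 1)) (Suc a)
             - adj_monom i \<beta> c (Suc (b - 1) - (b - Suc a)) (Suc a + (b - Suc a)))"
      by (simp only: mult_minus_right sum_distrib_left Var_diff_mult_adj_monom_telescope)
    with False show ?thesis by (simp add: f)
  qed
qed

lemma pi_op_eq_sum_pi_monom:
  "pi_op i f = (\<Sum>\<beta>\<in>Poly_Mapping.keys f. pi_monom i \<beta> (Poly_Mapping.lookup f \<beta>))"
proof -
  let ?g = "\<Sum>\<beta>\<in>Poly_Mapping.keys f. pi_monom i \<beta> (Poly_Mapping.lookup f \<beta>)"
  let ?m = "\<lambda>\<beta>. Var i * Poly_Mapping.single \<beta> (Poly_Mapping.lookup f \<beta>)"
  have "Var i * f = (\<Sum>\<beta>\<in>Poly_Mapping.keys f. ?m \<beta>)"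
    by (subst poly_mapping_sum_single_keys) (simp only: sum_distrib_left)
  then have "Var i * f - swap_poly i (Var i * f) = (\<Sum>\<beta>\<in>Poly_Mapping.keys f. ?m \<beta> - swap_poly i (?m \<beta>))"
    by (simp only: swap_poly_sum finite_keys sum_subtractf)
  also have "\<dots> = (Var i - Var (Suc i)) * ?g"
    by (simp only: pi_monom_divdiff_eq sum_distrib_left)
  finally have eq: "(Var i - Var (Suc i)) * ?g = Var i * f - swap_poly i (Var i * f)" ..
  show ?thesis
    unfolding pi_op_def divdiff_def
  proof (rule the_equality)
    fix g assume "(Var i - Var (Suc i)) * g = Var i * f - swap_poly i (Var i * f)"
    with eq have "(Var i - Var (Suc i)) * g = (Var i - Var (Suc i)) * ?g" by simp
    then show "g = ?g" using Var_minus_Var_Suc_neq_0 by simp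
  qed (rule eq)
qed

definition adj_redistrib :: "nat \<Rightarrow> (nat \<Rightarrow>\<^sub>0 nat) \<Rightarrow> (nat \<Rightarrow>\<^sub>0 nat) \<Rightarrow> bool" where
  "adj_redistrib i \<beta> \<gamma> \<longleftrightarrow>
     (\<forall>j. j \<noteq> i \<and> j \<noteq> Suc i \<longrightarrow> Poly_Mapping.lookup \<gamma> j = Poly_Mapping.lookup \<beta> j) \<and>
     Poly_Mapping.lookup \<gamma> i + Poly_Mapping.lookup \<gamma> (Suc i) =
       Poly_Mapping.lookup \<beta> i + Poly_Mapping.lookup \<beta> (Suc i)"

definition pi_coeff :: "nat \<Rightarrow> (nat \<Rightarrow>\<^sub>0 nat) \<Rightarrow> (nat \<Rightarrow>\<^sub>0 nat) \<Rightarrow> real" where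
  "pi_coeff i \<beta> \<gamma> = (if adj_redistrib i \<beta> \<gamma> then
     (let a = Poly_Mapping.lookup \<beta> i; b = Poly_Mapping.lookup \<beta> (Suc i); u = Poly_Mapping.lookup \<gamma> i in
      if b \<le> a then (if b \<le> u \<and> u \<le> a then 1 else 0) else (if a < u \<and> u < b then -1 else 0))
     else 0)"

lemma sum_when_unique:
  assumes "finite K" "\<And>k. k \<in> K \<Longrightarrow> P k \<longleftrightarrow> k = k0 \<and> R"
  shows "(\<Sum>k\<in>K. ((c::real) when P k)) = (if R \<and> k0 \<in> K then c else 0)"
proof -
  have "(\<Sum>k\<in>K. (c when P k)) = (\<Sum>k\<in>K. if k = k0 then (if R then c else 0) else 0)"
    by (rule sum.cong) (auto simp: assms(2) when_def)
  also have "\<dots> = (if R \<and> k0 \<in> K then c else 0)"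
    using assms(1) by (simp add: sum.delta')
  finally show ?thesis .
qed

lemma lookup_pi_monom: "Poly_Mapping.lookup (pi_monom i \<beta> c) \<gamma> = c * pi_coeff i \<beta> \<gamma>"
proof -
  define a where "a = Poly_Mapping.lookup \<beta> i"
  define b where "b = Poly_Mapping.lookup \<beta> (Suc i)"
  define u where "u = Poly_Mapping.lookup \<gamma> i"
  define v where "v = Poly_Mapping.lookup \<gamma> (Suc i)"
  define ag where "ag = (\<forall>j. j \<noteq> i \<and> j \<noteq> Suc i \<longrightarrow> Poly_Mapping.lookup \<gamma> j = Poly_Mapping.lookup \<beta> j)"
  have redistrib: "adj_redistrib i \<beta> \<gamma> \<longleftrightarrow> ag \<and> u + v = a + b"
    by (simp add: adj_redistrib_def ag_def a_def b_def u_def v_def)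
  show ?thesis
  proof (cases "b \<le> a")
    case True
    have "Poly_Mapping.lookup (pi_monom i \<beta> c) \<gamma>
        = (\<Sum>k<Suc a - b. (c when adj_update i \<beta> (a - k) (b + k) = \<gamma>))"
      unfolding pi_monom_def Let_def a_def[symmetric] b_def[symmetric] using True
      by (simp add: lookup_sum adj_monom_def lookup_single)
    also have "\<dots> = (if (ag \<and> u + v = a + b \<and> b \<le> u \<and> u \<le> a) \<and> a - u \<in> {..<Suc a - b} then c else 0)"
      by (rule sum_when_unique) (auto simp: adj_update_eq_iff ag_def u_def[symmetric] v_def[symmetric])
    also have "\<dots> = c * pi_coeff i \<beta> \<gamma>"
      using True unfolding pi_coeff_def redistrib Let_def a_def[symmetric] b_def[symmetric] u_def[symmetric]
      by auto
    finally show ?thesis .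
  next
    case False
    have "Poly_Mapping.lookup (pi_monom i \<beta> c) \<gamma>
        = - (\<Sum>k<b - Suc a. (c when adj_update i \<beta> (b - Suc k) (Suc a + k) = \<gamma>))"
      unfolding pi_monom_def Let_def a_def[symmetric] b_def[symmetric] using False
      by (simp add: lookup_sum adj_monom_def lookup_single)
    also have "(\<Sum>k<b - Suc a. (c when adj_update i \<beta> (b - Suc k) (Suc a + k) = \<gamma>))
       = (if (ag \<and> u + v = a + b \<and> a < u \<and> u < b) \<and> b - Suc u \<in> {..<b - Suc a} then c else 0)"
      by (rule sum_when_unique) (auto simp: adj_update_eq_iff ag_def u_def[symmetric] v_def[symmetric])
    also have "- \<dots> = c * pi_coeff i \<beta> \<gamma>"
      using False unfolding pi_coeff_def redistrib Let_def a_def[symmetric] b_def[symmetric] u_def[symmetric]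
      by auto
    finally show ?thesis .
  qed
qed

lemma lookup_pi_op: "Poly_Mapping.lookup (pi_op i f) \<gamma> =
   (\<Sum>\<beta>\<in>Poly_Mapping.keys f. Poly_Mapping.lookup f \<beta> * pi_coeff i \<beta> \<gamma>)"
  by (simp add: pi_op_eq_sum_pi_monom lookup_sum lookup_pi_monom)

lemma keys_pi_op:
  assumes "\<gamma> \<in> Poly_Mapping.keys (pi_op i f)"
  shows "\<exists>\<beta>\<in>Poly_Mapping.keys f. pi_coeff i \<beta> \<gamma> \<noteq> 0"
proof (rule ccontr)
  assume "\<not> ?thesis"
  then have "(\<Sum>\<beta>\<in>Poly_Mapping.keys f. Poly_Mapping.lookup f \<beta> * pi_coeff i \<beta> \<gamma>) = 0"
    by (intro sum.neutral) auto
  then show False using assms by (simp add: lookup_pi_op in_keys_iff)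
qed

section \<open>Exponents of \<open>\<pi>\<^sub>i f\<close>\<close>

definition exp_vec :: "(nat \<Rightarrow>\<^sub>0 nat) \<Rightarrow> (nat \<Rightarrow> real)" where
  "exp_vec \<beta> = (\<lambda>j. real (Poly_Mapping.lookup \<beta> j))"

lemma exp_vec_exps: "exp_vec (exps \<sigma>) = perm_vec \<sigma>"
  by (auto simp: exp_vec_def perm_vec_def lookup_exps)

lemma exp_vec_swap_exp: "exp_vec (swap_exp i \<beta>) = exp_vec \<beta> \<circ> swap_idx i"
  by (auto simp: exp_vec_def lookup_swap_exp)

lemma perm_vec_swap_list: "Suc i < length \<sigma> \<Longrightarrow> perm_vec (swap_list i \<sigma>) = perm_vec \<sigma> \<circ> swap_idx i"
  by (metis exps_swap_list exp_vec_exps exp_vec_swap_exp)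

lemma pi_coeff_self:
  "pi_coeff i \<beta> \<beta> = (if Poly_Mapping.lookup \<beta> (Suc i) \<le> Poly_Mapping.lookup \<beta> i then 1 else 0)"
  by (simp add: pi_coeff_def adj_redistrib_def Let_def)

lemma pi_coeff_swap_exp:
  "pi_coeff i \<beta> (swap_exp i \<beta>) = (if Poly_Mapping.lookup \<beta> (Suc i) \<le> Poly_Mapping.lookup \<beta> i then 1 else 0)"
  by (auto simp: pi_coeff_def adj_redistrib_def Let_def lookup_swap_exp swap_idx_def)

lemma pi_coeff_nonzero:
  assumes "pi_coeff i \<beta> \<gamma> \<noteq> 0"
  shows "adj_redistrib i \<beta> \<gamma>"
    and "min (Poly_Mapping.lookup \<beta> i) (Poly_Mapping.lookup \<beta> (Suc i)) \<le> Poly_Mapping.lookup \<gamma> i"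
    and "Poly_Mapping.lookup \<gamma> i \<le> max (Poly_Mapping.lookup \<beta> i) (Poly_Mapping.lookup \<beta> (Suc i))"
  using assms unfolding pi_coeff_def Let_def by (auto split: if_splits)

lemma exp_vec_on_segment:
  assumes "pi_coeff i \<beta> \<gamma> \<noteq> 0"
  obtains t where "0 \<le> t" "t \<le> 1"
    "exp_vec \<gamma> = (\<lambda>j. t * exp_vec \<beta> j + (1 - t) * (exp_vec \<beta> \<circ> swap_idx i) j)"
proof -
  define a where "a = Poly_Mapping.lookup \<beta> i"
  define b where "b = Poly_Mapping.lookup \<beta> (Suc i)"
  define u where "u = Poly_Mapping.lookup \<gamma> i"
  define v where "v = Poly_Mapping.lookup \<gamma> (Suc i)"
  have same: "\<And>j. j \<noteq> i \<Longrightarrow> j \<noteq> Suc i \<Longrightarrow> Poly_Mapping.lookup \<gamma> j = Poly_Mapping.lookup \<beta> j"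
    and uv: "u + v = a + b" and u: "min a b \<le> u" "u \<le> max a b"
    using pi_coeff_nonzero[OF assms] by (auto simp: adj_redistrib_def a_def b_def u_def v_def)
  show ?thesis
  proof (cases "a = b")
    case True
    then have "Poly_Mapping.lookup \<gamma> j = Poly_Mapping.lookup \<beta> j" for j
      using same[of j] uv u by (cases "j = i"; cases "j = Suc i") (auto simp: a_def b_def u_def v_def)
    then show ?thesis by (intro that[of 1]) (simp_all add: exp_vec_def)
  next
    case False
    define t where "t = (real u - real b) / (real a - real b)"
    have "0 \<le> t \<and> t \<le> 1"
      using False u by (cases "a < b") (auto simp: t_def divide_simps)
    moreover have ru: "real u = t * real a + (1 - t) * real b"
    proof -
      have "t * (real a - real b) = real u - real b" using False by (simp add: t_def)
      then show ?thesis by (simp add: algebra_simps)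
    qed
    moreover have "real v = t * real b + (1 - t) * real a"
      using ru uv by (simp add: algebra_simps flip: of_nat_add)
    ultimately show ?thesis
      using same by (intro that[of t]) (auto simp: fun_eq_iff exp_vec_def swap_idx_def a_def b_def u_def v_def algebra_simps)
  qed
qed

definition top_sum :: "nat \<Rightarrow> nat \<Rightarrow> nat" where
  "top_sum n k = \<Sum>{Suc n - k..n}"

text \<open>Weak submajorization by \<open>(1, \<dots>, n)\<close>: the defining inequalities of the permutohedron,
  whose vertices are the permutation vectors.\<close>

definition submajorized :: "nat \<Rightarrow> (nat \<Rightarrow> real) \<Rightarrow> bool" where
  "submajorized n x \<longleftrightarrow> (\<forall>S \<subseteq> {..<n}. (\<Sum>j\<in>S. x j) \<le> real (top_sum n (card S)))"

lemma sum_le_top_sum: "A \<subseteq> {1..n} \<Longrightarrow> \<Sum>A \<le> top_sum n (card A)"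
proof (induction n arbitrary: A)
  case 0
  then show ?case by simp
next
  case (Suc n)
  have fin: "finite A" using Suc.prems finite_subset by blast
  show ?case
  proof (cases "Suc n \<in> A")
    case True
    define A' where "A' = A - {Suc n}"
    have A': "A' \<subseteq> {1..n}" using Suc.prems by (auto simp: A'_def)
    have card: "card A = Suc (card A')" using True fin by (metis A'_def card_Suc_Diff1)
    have "\<Sum>A = Suc n + \<Sum>A'" using True fin by (simp add: A'_def sum.remove)
    also have "\<dots> \<le> Suc n + top_sum n (card A')" using Suc.IH[OF A'] by simp
    also have "\<dots> = top_sum (Suc n) (card A)"
    proof -
      have "{Suc (Suc n) - card A..Suc n} = insert (Suc n) {Suc n - card A'..n}"
        using card by auto
      then show ?thesis unfolding top_sum_def by simp
    qed
    finally show ?thesis .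
  next
    case False
    then have A: "A \<subseteq> {1..n}" using Suc.prems by (auto simp: le_Suc_eq)
    then have k: "card A \<le> n" using card_mono[OF _ A] by simp
    have "\<Sum>A \<le> top_sum n (card A)" using Suc.IH[OF A] .
    also have "\<dots> \<le> (\<Sum>v\<in>{Suc n - card A..n}. Suc v)" unfolding top_sum_def by (rule sum_mono) simp
    also have "\<dots> = (\<Sum>v\<in>{Suc (Suc n - card A)..Suc n}. v)"
      by (rule sum.shift_bounds_cl_Suc_ivl[symmetric])
    also have "\<dots> = top_sum (Suc n) (card A)"
      using k by (simp add: top_sum_def Suc_diff_le)
    finally show ?thesis .
  qed
qed

lemma submajorized_perm_vec:
  assumes "\<sigma> \<in> perms n"
  shows "submajorized n (perm_vec \<sigma>)"
  unfolding submajorized_def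
proof (intro allI impI)
  fix S assume S: "S \<subseteq> {..<n}"
  have l: "length \<sigma> = n" using assms by (rule perms_length)
  have dist: "distinct \<sigma>" and set: "set \<sigma> = {1..n}" using assms by (auto simp: perms_def)
  have inj: "inj_on ((!) \<sigma>) S"
    by (intro inj_onI) (metis S l lessThan_iff nth_eq_iff_index_eq subsetD dist)
  have "(!) \<sigma> ` S \<subseteq> set \<sigma>" using S l by auto
  then have "(!) \<sigma> ` S \<subseteq> {1..n}" by (simp only: set)
  then have "\<Sum>((!) \<sigma> ` S) \<le> top_sum n (card ((!) \<sigma> ` S))"
    by (rule sum_le_top_sum)
  then have "(\<Sum>j\<in>S. \<sigma> ! j) \<le> top_sum n (card S)"
    using inj by (simp add: sum.reindex card_image)
  then have "real (\<Sum>j\<in>S. \<sigma> ! j) \<le> real (top_sum n (card S))"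
    by (simp only: of_nat_le_iff)
  moreover have "(\<Sum>j\<in>S. perm_vec \<sigma> j) = real (\<Sum>j\<in>S. \<sigma> ! j)"
    unfolding perm_vec_def of_nat_sum using S l by (intro sum.cong) auto
  ultimately show "(\<Sum>j\<in>S. perm_vec \<sigma> j) \<le> real (top_sum n (card S))" by (simp only:)
qed

lemma submajorized_conv_perm_vec:
  assumes "P \<subseteq> perms n" and "x \<in> conv (perm_vec ` P)"
  shows "submajorized n x"
  unfolding submajorized_def
proof (intro allI impI)
  fix S assume "S \<subseteq> {..<n}"
  show "(\<Sum>j\<in>S. x j) \<le> real (top_sum n (card S))"
  proof (rule conv_sum_le[OF assms(2)])
    fix p assume "p \<in> perm_vec ` P"
    then obtain \<sigma> where "\<sigma> \<in> perms n" "p = perm_vec \<sigma>" using assms(1) by blast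
    then show "(\<Sum>j\<in>S. p j) \<le> real (top_sum n (card S))"
      using submajorized_perm_vec \<open>S \<subseteq> {..<n}\<close> by (simp add: submajorized_def)
  qed
qed

lemma perms_nth_image_greater:
  assumes "\<sigma> \<in> perms n"
  shows "(!) \<sigma> ` {j. j < n \<and> m < \<sigma> ! j} = {Suc m..n}"
proof -
  have "length \<sigma> = n" and set: "set \<sigma> = {1..n}" using assms by (auto simp: perms_length perms_def)
  then have in_range: "v \<in> {1..n} \<longleftrightarrow> (\<exists>j<n. \<sigma> ! j = v)" for v
    by (simp only: in_set_conv_nth flip: set)
  show ?thesis
  proof (intro equalityI subsetI)
    fix v assume "v \<in> (!) \<sigma> ` {j. j < n \<and> m < \<sigma> ! j}"
    then show "v \<in> {Suc m..n}" using in_range[of v] by auto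
  next
    fix v assume v: "v \<in> {Suc m..n}"
    then obtain j where "j < n" "\<sigma> ! j = v" using in_range[of v] by auto
    with v show "v \<in> (!) \<sigma> ` {j. j < n \<and> m < \<sigma> ! j}" by auto
  qed
qed

lemma top_sum_Suc_diff: "m \<le> n \<Longrightarrow> top_sum n (Suc (n - m)) = m + \<Sum>{Suc m..n}"
  by (simp add: top_sum_def atLeastAtMost_insertL[symmetric])

lemma submajorized_adj_le_max:
  assumes sub: "submajorized n (exp_vec \<beta>)" and \<sigma>: "\<sigma> \<in> perms n" and i: "Suc i < n"
    and same: "\<And>j. j \<noteq> i \<Longrightarrow> j \<noteq> Suc i \<Longrightarrow> Poly_Mapping.lookup \<beta> j = Poly_Mapping.lookup (exps \<sigma>) j"
    and x: "x = i \<or> x = Suc i"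
  shows "Poly_Mapping.lookup \<beta> x \<le> max (\<sigma> ! i) (\<sigma> ! Suc i)"
proof -
  have l: "length \<sigma> = n" using \<sigma> by (rule perms_length)
  define m where "m = max (\<sigma> ! i) (\<sigma> ! Suc i)"
  have "m \<in> set \<sigma>" using i l by (auto simp: m_def max_def)
  then have "m \<le> n" using \<sigma> by (auto simp: perms_def)
  text \<open>The positions carrying the values \<open>m + 1, \<dots>, n\<close> together with \<open>x\<close> form a set on which
    the bound \<open>top_sum\<close> is \<open>m + (m + 1) + \<dots> + n\<close>.\<close>
  define S where "S = {j. j < n \<and> m < \<sigma> ! j}"
  have S: "finite S" "x \<notin> S" "insert x S \<subseteq> {..<n}"
    using x i by (auto simp: S_def m_def)
  have S_same: "Poly_Mapping.lookup \<beta> j = \<sigma> ! j" if "j \<in> S" for j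
  proof -
    have "j \<noteq> i" "j \<noteq> Suc i" using that by (auto simp: S_def m_def)
    then show ?thesis using that same by (simp add: S_def lookup_exps l)
  qed
  have inj: "inj_on ((!) \<sigma>) S"
    using \<sigma> by (intro inj_on_nth) (auto simp: S_def perms_def l)
  have img: "(!) \<sigma> ` S = {Suc m..n}"
    unfolding S_def by (rule perms_nth_image_greater[OF \<sigma>])
  have "(\<Sum>j\<in>S. Poly_Mapping.lookup \<beta> j) = \<Sum>((!) \<sigma> ` S)"
    using inj by (simp add: sum.reindex S_same)
  then have sum_S: "(\<Sum>j\<in>S. Poly_Mapping.lookup \<beta> j) = \<Sum>{Suc m..n}" by (simp only: img)
  have card: "card (insert x S) = Suc (n - m)"
    using S card_image[OF inj] img by simp
  have "(\<Sum>j\<in>insert x S. exp_vec \<beta> j) \<le> real (top_sum n (card (insert x S)))"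
    using sub S(3) unfolding submajorized_def by blast
  then have "(\<Sum>j\<in>insert x S. Poly_Mapping.lookup \<beta> j) \<le> m + \<Sum>{Suc m..n}"
    unfolding exp_vec_def card top_sum_Suc_diff[OF \<open>m \<le> n\<close>] of_nat_sum[symmetric] of_nat_le_iff .
  then show ?thesis using S sum_S by (simp add: m_def)
qed

lemma pi_coeff_exps_nonzero_cases:
  assumes sub: "submajorized n (exp_vec \<beta>)" and \<sigma>: "\<sigma> \<in> perms n" and i: "Suc i < n"
    and nz: "pi_coeff i \<beta> (exps \<sigma>) \<noteq> 0"
  shows "\<beta> = exps \<sigma> \<or> \<beta> = swap_exp i (exps \<sigma>)"
proof -
  have l: "length \<sigma> = n" using \<sigma> by (rule perms_length)
  define a where "a = Poly_Mapping.lookup \<beta> i"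
  define b where "b = Poly_Mapping.lookup \<beta> (Suc i)"
  define u where "u = \<sigma> ! i"
  define v where "v = \<sigma> ! Suc i"
  have uv_exps: "Poly_Mapping.lookup (exps \<sigma>) i = u" "Poly_Mapping.lookup (exps \<sigma>) (Suc i) = v"
    using i l by (auto simp: lookup_exps u_def v_def)
  have same: "\<And>j. j \<noteq> i \<Longrightarrow> j \<noteq> Suc i \<Longrightarrow> Poly_Mapping.lookup \<beta> j = Poly_Mapping.lookup (exps \<sigma>) j"
    and uv: "u + v = a + b" and u: "min a b \<le> u" "u \<le> max a b"
    using pi_coeff_nonzero[OF nz] uv_exps by (auto simp: adj_redistrib_def a_def b_def)
  have "a \<le> max u v" "b \<le> max u v"
    using submajorized_adj_le_max[OF sub \<sigma> i same] by (auto simp: a_def b_def u_def v_def)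
  then consider "a = u" "b = v" | "a = v" "b = u"
    using uv u by (auto simp: max_def min_def split: if_splits)
  then show ?thesis
  proof cases
    case 1
    then show ?thesis
      using same uv_exps by (intro disjI1 poly_mapping_eqI) (metis a_def b_def)
  next
    case 2
    then show ?thesis
      using same uv_exps
      by (intro disjI2 poly_mapping_eqI) (auto simp: lookup_swap_exp swap_idx_def a_def b_def)
  qed
qed

lemma pi_coeff_exps:
  assumes sub: "submajorized n (exp_vec \<beta>)" and \<sigma>: "\<sigma> \<in> perms n" and i: "Suc i < n"
  shows "pi_coeff i \<beta> (exps \<sigma>) = (if \<beta> = exps (desc_at i \<sigma>) then 1 else 0)"
proof -
  have l: "Suc i < length \<sigma>" using \<sigma> i by (simp add: perms_length)
  then have lookups: "Poly_Mapping.lookup (exps \<sigma>) i = \<sigma> ! i"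
    "Poly_Mapping.lookup (exps \<sigma>) (Suc i) = \<sigma> ! Suc i"
    by (simp_all add: lookup_exps)
  have ne: "\<sigma> ! i \<noteq> \<sigma> ! Suc i" using \<sigma> i by (rule perms_nth_neq)
  have self: "pi_coeff i (exps \<sigma>) (exps \<sigma>) = (if \<sigma> ! Suc i < \<sigma> ! i then 1 else 0)"
    using ne by (simp add: pi_coeff_self lookups)
  have swap: "pi_coeff i (swap_exp i (exps \<sigma>)) (exps \<sigma>) = (if \<sigma> ! i < \<sigma> ! Suc i then 1 else 0)"
    using ne pi_coeff_swap_exp[of i "swap_exp i (exps \<sigma>)"]
    by (simp add: lookup_swap_exp swap_idx_def lookups)
  have swap_ne: "swap_exp i (exps \<sigma>) \<noteq> exps \<sigma>"
    using ne lookups by (metis lookup_swap_exp swap_idx_def)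
  have desc: "exps (desc_at i \<sigma>) = (if \<sigma> ! Suc i < \<sigma> ! i then exps \<sigma> else swap_exp i (exps \<sigma>))"
    using l by (simp add: desc_at_def exps_swap_list)
  show ?thesis
  proof (cases "\<beta> = exps \<sigma> \<or> \<beta> = swap_exp i (exps \<sigma>)")
    case True
    then show ?thesis using self swap swap_ne desc ne by auto
  next
    case False
    then show ?thesis using pi_coeff_exps_nonzero_cases[OF sub \<sigma> i] desc by auto
  qed
qed

lemma lookup_pi_op_exps:
  assumes sub: "\<And>\<beta>. \<beta> \<in> Poly_Mapping.keys f \<Longrightarrow> submajorized n (exp_vec \<beta>)"
    and "\<sigma> \<in> perms n" "Suc i < n"
  shows "Poly_Mapping.lookup (pi_op i f) (exps \<sigma>) = Poly_Mapping.lookup f (exps (desc_at i \<sigma>))"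
proof -
  have "Poly_Mapping.lookup (pi_op i f) (exps \<sigma>) = (\<Sum>\<beta>\<in>Poly_Mapping.keys f.
      if \<beta> = exps (desc_at i \<sigma>) then Poly_Mapping.lookup f \<beta> else 0)"
    unfolding lookup_pi_op using pi_coeff_exps[OF sub assms(2,3)] by (intro sum.cong) simp_all
  also have "\<dots> = Poly_Mapping.lookup f (exps (desc_at i \<sigma>))"
    by (simp add: sum.delta' in_keys_iff)
  finally show ?thesis .
qed

section \<open>Key polynomials\<close>

abbreviation upper_perm_vecs :: "nat list \<Rightarrow> (nat \<Rightarrow> real) set" where
  "upper_perm_vecs a \<equiv> perm_vec ` {\<sigma>. bruhat_le a \<sigma>}"

lemma upper_perm_vecs_swap_list_subset:
  assumes a: "a \<in> perms n" and i: "Suc i < n" "a ! i < a ! Suc i"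
  shows "upper_perm_vecs (swap_list i a) \<subseteq> upper_perm_vecs a"
    and "(\<lambda>y. y \<circ> swap_idx i) ` upper_perm_vecs (swap_list i a) \<subseteq> upper_perm_vecs a"
proof -
  have l: "Suc i < length a" using a i by (simp add: perms_length)
  show "upper_perm_vecs (swap_list i a) \<subseteq> upper_perm_vecs a"
    using bruhat_step_swap_list[OF l i(2)] by (auto intro: bruhat_le_trans bruhat_step_imp_le)
  show "(\<lambda>y. y \<circ> swap_idx i) ` upper_perm_vecs (swap_list i a) \<subseteq> upper_perm_vecs a"
  proof clarify
    fix \<sigma> assume \<sigma>: "bruhat_le (swap_list i a) \<sigma>"
    then have "perm_vec \<sigma> \<circ> swap_idx i = perm_vec (swap_list i \<sigma>)"
      using l bruhat_le_length[OF \<sigma>] by (simp add: perm_vec_swap_list)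
    moreover have "bruhat_le a (swap_list i \<sigma>)" using bruhat_le_lift_swap[OF a i \<sigma>] .
    ultimately show "perm_vec \<sigma> \<circ> swap_idx i \<in> upper_perm_vecs a" by blast
  qed
qed

lemma exp_vec_keys_pi_op_in_conv:
  assumes a: "a \<in> perms n" and i: "Suc i < n" "a ! i < a ! Suc i"
    and f: "\<And>\<beta>. \<beta> \<in> Poly_Mapping.keys f \<Longrightarrow> exp_vec \<beta> \<in> conv (upper_perm_vecs (swap_list i a))"
    and \<gamma>: "\<gamma> \<in> Poly_Mapping.keys (pi_op i f)"
  shows "exp_vec \<gamma> \<in> conv (upper_perm_vecs a)"
proof -
  obtain \<beta> where \<beta>: "\<beta> \<in> Poly_Mapping.keys f" "pi_coeff i \<beta> \<gamma> \<noteq> 0"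
    using keys_pi_op[OF \<gamma>] by blast
  obtain t where t: "0 \<le> t" "t \<le> 1"
    "exp_vec \<gamma> = (\<lambda>j. t * exp_vec \<beta> j + (1 - t) * (exp_vec \<beta> \<circ> swap_idx i) j)"
    using exp_vec_on_segment[OF \<beta>(2)] by blast
  have "exp_vec \<beta> \<in> conv (upper_perm_vecs a)"
    using conv_mono[OF upper_perm_vecs_swap_list_subset(1)[OF a i]] f[OF \<beta>(1)] by blast
  moreover have "exp_vec \<beta> \<circ> swap_idx i \<in> conv (upper_perm_vecs a)"
    using conv_mono[OF upper_perm_vecs_swap_list_subset(2)[OF a i]] comp_in_conv[OF f[OF \<beta>(1)]]
    by blast
  ultimately have "(\<lambda>j. t * exp_vec \<beta> j + (1 - t) * (exp_vec \<beta> \<circ> swap_idx i) j) \<in> conv (upper_perm_vecs a)"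
    using t(1,2) by (rule conv_convex_comb)
  with t(3) show ?thesis by simp
qed

definition key_invariant :: "mpoly \<Rightarrow> nat list \<Rightarrow> bool" where
  "key_invariant f a \<longleftrightarrow>
     (\<forall>\<beta>\<in>Poly_Mapping.keys f. exp_vec \<beta> \<in> conv (upper_perm_vecs a)) \<and>
     (\<forall>\<sigma>. bruhat_le a \<sigma> \<longrightarrow> Poly_Mapping.lookup f (exps \<sigma>) = 1)"

lemma key_invariant_monom:
  assumes "sorted_wrt (\<ge>) a"
  shows "key_invariant (monom a) a"
proof -
  have "exp_vec (exps a) \<in> conv (upper_perm_vecs a)"
    by (rule subsetD[OF subset_conv]) (auto simp: exp_vec_exps)
  moreover have "Poly_Mapping.lookup (monom a) (exps \<sigma>) = 1" if "bruhat_le a \<sigma>" for \<sigma>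
    using sorted_desc_bruhat_maximal[OF assms that] by (simp add: monom_def)
  ultimately show ?thesis by (simp add: key_invariant_def monom_def)
qed

lemma key_invariant_pi_op:
  assumes a: "a \<in> perms n" and i: "Suc i < n" "a ! i < a ! Suc i"
    and inv: "key_invariant f (swap_list i a)"
  shows "key_invariant (pi_op i f) a"
proof -
  have f: "exp_vec \<beta> \<in> conv (upper_perm_vecs (swap_list i a))" if "\<beta> \<in> Poly_Mapping.keys f" for \<beta>
    using inv that by (simp add: key_invariant_def)
  have "Poly_Mapping.lookup (pi_op i f) (exps \<sigma>) = 1" if \<sigma>: "bruhat_le a \<sigma>" for \<sigma>
  proof -
    have "{\<sigma>. bruhat_le (swap_list i a) \<sigma>} \<subseteq> perms n"
      using bruhat_le_perms swap_list_perms a i by (simp add: perms_length subset_eq)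
    then have "Poly_Mapping.lookup (pi_op i f) (exps \<sigma>) = Poly_Mapping.lookup f (exps (desc_at i \<sigma>))"
      using f bruhat_le_perms[OF \<sigma> a] i(1)
      by (intro lookup_pi_op_exps) (auto intro: submajorized_conv_perm_vec)
    also have "\<dots> = 1"
      using inv bruhat_le_lift_desc[OF a i \<sigma>] by (simp add: key_invariant_def)
    finally show ?thesis .
  qed
  then show ?thesis
    using exp_vec_keys_pi_op_in_conv[OF a i f] by (simp add: key_invariant_def)
qed

lemma key_invariant_key_aux:
  "a \<in> perms n \<Longrightarrow> n_asc a \<le> k \<Longrightarrow> key_invariant (key_aux k a) a"
proof (induction k arbitrary: a)
  case 0
  then show ?case using n_asc_eq_0_imp_sorted_desc key_invariant_monom by simp
next
  case (Suc k)
  show ?case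
  proof (cases "sorted_wrt (\<ge>) a")
    case True
    then show ?thesis by (simp add: key_invariant_monom)
  next
    case False
    define i where "i = (LEAST i. Suc i < length a \<and> a ! i < a ! Suc i)"
    have i: "Suc i < length a" "a ! i < a ! Suc i"
      using LeastI_ex[OF not_sorted_desc_imp_ascent[OF False]] by (simp_all add: i_def)
    have "key_invariant (key_aux k (swap_list i a)) (swap_list i a)"
      using Suc n_asc_swap_list_less[OF i] swap_list_perms[OF i(1)] by simp
    then have "key_invariant (pi_op i (key_aux k (swap_list i a))) a"
      using Suc.prems(1) i by (intro key_invariant_pi_op) (simp_all add: perms_length)
    then show ?thesis using False by (simp add: i_def[symmetric] swap_list_def Let_def)
  qed
qed

theorem corollary1p3:
  fixes n :: nat and w :: "nat list"
  assumes "w \<in> perms n"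
  shows "newton (key w) = bruhat_polytope n w (w0 n)"
proof -
  have inv: "key_invariant (key w) w"
    using key_invariant_key_aux[OF assms] by (simp add: key_def)
  have "newton (key w) = conv (exp_vec ` Poly_Mapping.keys (key w))"
    unfolding newton_def by (rule arg_cong[where f=conv]) (auto simp: exp_vec_def in_keys_iff)
  moreover have "bruhat_polytope n w (w0 n) = conv (upper_perm_vecs w)"
    unfolding bruhat_polytope_def
    by (rule arg_cong[where f=conv]) (auto intro: bruhat_le_perms[OF _ assms] bruhat_le_w0)
  moreover have "exp_vec ` Poly_Mapping.keys (key w) \<subseteq> conv (upper_perm_vecs w)"
    using inv by (auto simp: key_invariant_def)
  moreover have "upper_perm_vecs w \<subseteq> exp_vec ` Poly_Mapping.keys (key w)"
  proof clarify
    fix \<sigma> assume "bruhat_le w \<sigma>"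
    then have "exps \<sigma> \<in> Poly_Mapping.keys (key w)"
      using inv by (simp add: key_invariant_def in_keys_iff)
    then show "perm_vec \<sigma> \<in> exp_vec ` Poly_Mapping.keys (key w)"
      by (metis exp_vec_exps image_eqI)
  qed
  ultimately show ?thesis by (simp add: conv_eqI)
qed

end
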